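(* Let $d\ge1$, let $P\subseteq[-1,1]^d$ be a convex $d$-dimensional polytope containing the origin, let $\alpha\le 1$ be a constant, and let $\mathcal{A}$ be an algorithm such that for every $\vec{w}\in\mathbb{R}^d$, $\mathcal{A}(\vec{w})\in P$ and $\mathcal{A}(\vec{w})\cdot\vec{w}\ge\alpha\cdot\max_{\vec{x}\in P}\vec{x}\cdot\vec{w}$. Let $P_1=\{\vec{\pi} : \vec{\pi}\cdot\vec{w}\le\mathcal{A}(\vec{w})\cdot\vec{w}\ \forall\vec{w}\in[-1,1]^d\}$, and let $WSO$ be the weird separation oracle defined (with arbitrary parameters $N\in\mathbb{N}$, $\delta>0$) as in the context. Whenever $WSO$ rejects a point $\vec{\pi}$, it acts as a valid separation oracle for $P_1$ (and for any polytope contained in $P_1$): $\vec{\pi}\notin P_1$ and the hyperplane it outputs separates $\vec{\pi}$ from $P_1$ (i.e. the output halfspace contains $P_1$ but not $\vec{\pi}$). In other words, the only difference between $WSO$ and a valid separation oracle for $P_1$ is that $WSO$ may accept points outside of $P_1$.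
   Context: "Running the ellipsoid algorithm with a weird separation oracle" (an algorithm which on input $\vec{x}$ outputs either "yes" or a hyperplane violated by $\vec{x}$, the set of accepted points not necessarily being convex) means: start from a suitable initial ellipsoid; query the oracle on the center of the current ellipsoid; if accepted, output it as a feasible point; otherwise update the ellipsoid using the returned violated hyperplane as in the standard ellipsoid algorithm; repeat for a predetermined number $N$ of iterations, and if no feasible point is found, output "infeasible". The oracle $WSO$, on input $\vec{\pi}\in\mathbb{R}^d$, runs the ellipsoid algorithm for $N$ iterations on the following problem in the variables $(\vec{w},t)$: constraints $\vec{w}\in[-1,1]^d$; $t-\vec{\pi}\cdot\vec{w}\le-\delta$; and the weird oracle $\widehat{WSO}(\vec{w},t)$, which answers "yes" if $t\ge\mathcal{A}(\vec{w})\cdot\vec{w}$ and otherwise outputs the violated hyperplane $t'\ge\mathcal{A}(\vec{w})\cdot\vec{w}'$ (in the variables $(\vec{w}',t')$). If this inner ellipsoid run outputs "infeasible", $WSO(\vec{\pi})=$"yes"; if it finds a feasible point $(t^*,\vec{w}^* )$, $WSO$ rejects $\vec{\pi}$ and outputs the hyperplane $\vec{w}^*\cdot\vec{\pi}'\le t^*$ (in the variable $\vec{\pi}'$). *)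

theory Defs
  imports "HOL-Analysis.Analysis"
begin

text \<open>Oracle answers: Inl () means "yes"; Inr (a, b) means the queried point violates
  the halfspace a \<bullet> x \<le> b (a separating hyperplane).\<close>

type_synonym 'm oracle_answer = "unit + ((real ^ 'm) \<times> real)"

text \<open>Standard central-cut ellipsoid update in dimension m = CARD('m): ellipsoid
  E(c,Q) = {x. (x-c)^T Q^{-1} (x-c) \<le> 1}, cut a \<bullet> x \<le> a \<bullet> c.\<close>

definition ellipsoid_update ::
  "real ^ 'm::finite \<Rightarrow> real ^ 'm \<Rightarrow> real ^ 'm ^ 'm \<Rightarrow> (real ^ 'm) \<times> (real ^ 'm ^ 'm)" where
  "ellipsoid_update a c Q =
    (let n = real CARD('m);
         b = (1 / sqrt (a \<bullet> (Q *v a))) *\<^sub>R (Q *v a);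
         c' = c - (1 / (n + 1)) *\<^sub>R b;
         Q' = (n\<^sup>2 / (n\<^sup>2 - 1)) *\<^sub>R (Q - (2 / (n + 1)) *\<^sub>R (\<chi> i j. b $ i * b $ j))
     in (c', Q'))"

text \<open>None = "infeasible".\<close>

fun ellipsoid_run ::
  "(real ^ 'm::finite \<Rightarrow> 'm oracle_answer) \<Rightarrow> nat \<Rightarrow> real ^ 'm \<Rightarrow> real ^ 'm ^ 'm \<Rightarrow> (real ^ 'm) option" where
  "ellipsoid_run orc 0 c Q = None"
| "ellipsoid_run orc (Suc k) c Q =
     (case orc c of
        Inl _ \<Rightarrow> Some c
      | Inr (a, b) \<Rightarrow> (case ellipsoid_update a c Q of (c', Q') \<Rightarrow> ellipsoid_run orc k c' Q'))"

text \<open>The inner variables (w, t) \<in> R^d \<times> R are encoded as a vector indexed by 'n option: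
  coordinate Some i is w_i, coordinate None is t.\<close>

definition embed_wt :: "real ^ 'n \<Rightarrow> real \<Rightarrow> real ^ ('n::finite option)" where
  "embed_wt w t = (\<chi> j. case j of None \<Rightarrow> t | Some i \<Rightarrow> w $ i)"

definition w_of :: "real ^ ('n::finite option) \<Rightarrow> real ^ 'n" where
  "w_of x = (\<chi> i. x $ Some i)"

definition t_of :: "real ^ ('n::finite option) \<Rightarrow> real" where
  "t_of x = x $ None"

text \<open>The separation oracle for the inner problem: constraints w \<in> [-1,1]^d,
  t - \<pi>\<bullet>w \<le> -\<delta>, and the weird oracle \<open>WSO_hat\<close>.\<close>

definition inner_oracle ::
  "(real ^ 'n \<Rightarrow> real ^ 'n) \<Rightarrow> real \<Rightarrow> real ^ 'n \<Rightarrow> real ^ ('n::finite option) \<Rightarrow> ('n option) oracle_answer" where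
  "inner_oracle A \<delta> \<pi> x =
    (let w = w_of x; t = t_of x in
     if \<exists>i. \<bar>w $ i\<bar> > 1 then
       (let i = (SOME i. \<bar>w $ i\<bar> > 1) in Inr (embed_wt (sgn (w $ i) *\<^sub>R axis i 1) 0, 1))
     else if \<not> (t - \<pi> \<bullet> w \<le> - \<delta>) then
       Inr (embed_wt (- \<pi>) 1, - \<delta>)
     else if t \<ge> A w \<bullet> w then Inl ()
     else Inr (embed_wt (A w) (-1), 0))"

text \<open>WSO(\<pi>): Inl () = "yes"; Inr (w*, t*) = reject with the hyperplane w* \<bullet> \<pi>' \<le> t*.\<close>

definition WSO ::
  "(real ^ 'n \<Rightarrow> real ^ 'n) \<Rightarrow> nat \<Rightarrow> real \<Rightarrow> real ^ ('n::finite option) \<Rightarrow> real ^ ('n option) ^ ('n option)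
     \<Rightarrow> real ^ 'n \<Rightarrow> unit + ((real ^ 'n) \<times> real)" where
  "WSO A N \<delta> c0 Q0 \<pi> =
    (case ellipsoid_run (inner_oracle A \<delta> \<pi>) N c0 Q0 of
       None \<Rightarrow> Inl ()
     | Some x \<Rightarrow> Inr (w_of x, t_of x))"

definition P1_set :: "(real ^ 'n \<Rightarrow> real ^ 'n) \<Rightarrow> (real ^ 'n::finite) set" where
  "P1_set A = {\<pi>. \<forall>w \<in> cbox (- 1) 1. \<pi> \<bullet> w \<le> A w \<bullet> w}"

end

theory Submission
  imports Defs
begin

text \<open>WSO only rejects \<open>\<pi>\<close> after finding a point \<open>(w*, t*)\<close> accepted by every inner
  constraint. Acceptance by \<open>WSO_hat\<close> gives \<open>t* \<ge> A w* \<bullet> w*\<close>, which with \<open>w* \<in> [-1,1]^d\<close>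
  bounds \<open>w* \<bullet> \<pi>'\<close> by \<open>t*\<close> on all of \<open>P1\<close>, while the cut \<open>t* - \<pi> \<bullet> w* \<le> -\<delta> < 0\<close>
  puts \<open>\<pi>\<close> strictly outside that halfspace. None of the hypotheses on \<open>P\<close>, \<open>\<alpha>\<close> or the
  approximation guarantee of \<open>A\<close> is needed.\<close>

lemma ellipsoid_run_Some_accepted:
  assumes "ellipsoid_run orc k c Q = Some x"
  shows "orc x = Inl ()"
  using assms
proof (induction k arbitrary: c Q)
  case 0
  then show ?case by simp
next
  case (Suc k)
  show ?case
  proof (cases "orc c")
    case Inl
    then show ?thesis using Suc.prems by simp
  next
    case (Inr cut)
    obtain a b where "cut = (a, b)" by fastforce
    moreover obtain c' Q' where "ellipsoid_update a c Q = (c', Q')" by fastforce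
    ultimately show ?thesis using Suc Inr by simp
  qed
qed

lemma inner_oracle_accepts_iff:
  "inner_oracle A \<delta> \<pi> x = Inl () \<longleftrightarrow>
     w_of x \<in> cbox (- 1) 1 \<and> t_of x - \<pi> \<bullet> w_of x \<le> - \<delta> \<and> A (w_of x) \<bullet> w_of x \<le> t_of x"
proof -
  have "w_of x \<in> cbox (- 1) 1 \<longleftrightarrow> \<not> (\<exists>i. \<bar>w_of x $ i\<bar> > 1)"
    by (auto simp: mem_box_cart abs_le_iff not_less)
  then show ?thesis
    by (auto simp: inner_oracle_def Let_def split: if_splits)
qed

lemma P1_set_in_halfspace:
  assumes "w \<in> cbox (- 1) 1" and "A w \<bullet> w \<le> t" and "\<pi>' \<in> P1_set A"
  shows "w \<bullet> \<pi>' \<le> t"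
  using assms by (force simp: P1_set_def inner_commute)

theorem corollary1:
  fixes P :: "(real ^ 'n) set" and A :: "real ^ 'n \<Rightarrow> real ^ 'n" and \<alpha> :: real
    and N :: nat and \<delta> :: real
    and c0 :: "real ^ ('n option)" and Q0 :: "real ^ ('n option) ^ ('n option)"
    and \<pi> :: "real ^ 'n" and a :: "real ^ 'n" and b :: real
  assumes "polytope P" and "convex P" and "aff_dim P = int CARD('n)"
    and "P \<subseteq> cbox (- 1) 1" and "0 \<in> P"
    and "\<alpha> \<le> 1"
    and "\<And>w. A w \<in> P"
    and "\<And>w. A w \<bullet> w \<ge> \<alpha> * (SUP x\<in>P. x \<bullet> w)"
    and "\<delta> > 0"
    and "WSO A N \<delta> c0 Q0 \<pi> = Inr (a, b)"
  shows "\<pi> \<notin> P1_set A \<and> \<not> (a \<bullet> \<pi> \<le> b) \<and> (\<forall>\<pi>' \<in> P1_set A. a \<bullet> \<pi>' \<le> b)"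
proof -
  obtain x where run: "ellipsoid_run (inner_oracle A \<delta> \<pi>) N c0 Q0 = Some x"
    and ab: "a = w_of x" "b = t_of x"
    using \<open>WSO A N \<delta> c0 Q0 \<pi> = Inr (a, b)\<close> by (auto simp: WSO_def split: option.splits)
  have box: "a \<in> cbox (- 1) 1" and cut: "b - \<pi> \<bullet> a \<le> - \<delta>" and hat: "A a \<bullet> a \<le> b"
    using ellipsoid_run_Some_accepted[OF run] by (simp_all add: inner_oracle_accepts_iff ab)
  have rejects: "\<not> a \<bullet> \<pi> \<le> b"
    using cut \<open>\<delta> > 0\<close> by (simp add: inner_commute)
  have contains: "\<forall>\<pi>' \<in> P1_set A. a \<bullet> \<pi>' \<le> b"
    using P1_set_in_halfspace[where A = A, OF box hat] by blast
  show ?thesis using rejects contains by blast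
qed

end
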